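(* Let $\mathcal{R}=(\mathcal{W},\mathcal{R}_1,\mathcal{R}_2)$ with $\mathcal{W}=\{1,\dots,m\}$, let $\mathcal{S}$, $L$, $K_1,\dots,K_4$ be constructed from $\mathcal{R}$ as below, and let $\mathcal{T}$ be a solution to the $\mathcal{S}$-cyclic triomino problem. Fix $s\in\mathbb{Z}^2$. If $q(s,i)$ holds for some $1\le i\le 4$, then $q(s,i)$ holds for every $1\le i\le 4$.
   Context: A domino set is $\mathcal{R}=(\mathcal{W},\mathcal{R}_1,\mathcal{R}_2)$ with $\mathcal{W}$ non-empty finite and $\mathcal{R}_1,\mathcal{R}_2\subset\mathcal{W}^2$; here $\mathcal{W}=\{1,\dots,m\}$. Let $u_1=(1,0),u_2=(0,1),u_3=(-1,0),u_4=(0,-1)$, indices mod 4. Fix $n\ge 2m+1$ and regard integers as elements of $\mathbb{Z}_n$. Let $L=\{(w,0,0): w\in\mathcal{W}\}$, $K_1=L\cup\{(0,b,a):(a,b)\in\mathcal{R}_1\}$, $K_2=L\cup\{(0,a,b):(a,b)\in\mathcal{R}_2\}$, $K_3=L\cup\{(0,a,b):(a,b)\in\mathcal{R}_1\}$, $K_4=L\cup\{(0,b,a):(a,b)\in\mathcal{R}_2\}$, with $K_{i+4}=K_i$. Let $\mathcal{V}=\mathbb{Z}_n$, $\mathcal{S}_i=\{(a+k,b+k,c+k):(a,b,c)\in K_i, k\in\mathcal{V}\}$, $\mathcal{S}_{i+4}=\mathcal{S}_i$, and $\mathcal{S}=(\mathcal{V},\mathcal{S}_1,\dots,\mathcal{S}_4)$.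 A solution to the $\mathcal{S}$-cyclic triomino problem is a function $\mathcal{T}:\mathbb{Z}^2\to\mathcal{V}$ with $(\mathcal{T}(s),\mathcal{T}(s+u_i),\mathcal{T}(s+u_{i+1}))\in\mathcal{S}_i$ for all $s$ and $1\le i\le 4$. For $s\in\mathbb{Z}^2$, $i\in\mathbb{Z}$, $p(s,i)$ is the statement $(\mathcal{T}(s),\mathcal{T}(s+u_i),\mathcal{T}(s+u_{i+1}))\in L$ and $q(s,i)$ is the statement $(\mathcal{T}(s),\mathcal{T}(s+u_i),\mathcal{T}(s+u_{i+1}))\in K_i\setminus L$. *)

theory Defs
  imports Main
begin

text \<open>Domino set: W = {1..m}, relations R1 R2 over W. Elements of Z_n are represented
  by integers in {0..<n}; an integer x is regarded as the element x mod n.\<close>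

definition domino_set :: "nat \<Rightarrow> (nat \<times> nat) set \<Rightarrow> (nat \<times> nat) set \<Rightarrow> bool" where
  "domino_set m R1 R2 \<longleftrightarrow> m \<ge> 1 \<and> R1 \<subseteq> {1..m} \<times> {1..m} \<and> R2 \<subseteq> {1..m} \<times> {1..m}"

definition u :: "int \<Rightarrow> int \<times> int" where
  "u i = (if i mod 4 = 1 then (1, 0) else if i mod 4 = 2 then (0, 1)
          else if i mod 4 = 3 then (-1, 0) else (0, -1))"

definition addv :: "int \<times> int \<Rightarrow> int \<times> int \<Rightarrow> int \<times> int" where
  "addv s v = (fst s + fst v, snd s + snd v)"

definition Lset :: "nat \<Rightarrow> nat \<Rightarrow> (int \<times> int \<times> int) set" where
  "Lset n m = {(int w mod int n, 0, 0) | w. w \<in> {1..m}}"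

definition Kset :: "nat \<Rightarrow> nat \<Rightarrow> (nat \<times> nat) set \<Rightarrow> (nat \<times> nat) set \<Rightarrow> int \<Rightarrow> (int \<times> int \<times> int) set" where
  "Kset n m R1 R2 i = Lset n m \<union>
     (if i mod 4 = 1 then {(0, int b mod int n, int a mod int n) | a b. (a, b) \<in> R1}
      else if i mod 4 = 2 then {(0, int a mod int n, int b mod int n) | a b. (a, b) \<in> R2}
      else if i mod 4 = 3 then {(0, int a mod int n, int b mod int n) | a b. (a, b) \<in> R1}
      else {(0, int b mod int n, int a mod int n) | a b. (a, b) \<in> R2})"

definition Sset :: "nat \<Rightarrow> nat \<Rightarrow> (nat \<times> nat) set \<Rightarrow> (nat \<times> nat) set \<Rightarrow> int \<Rightarrow> (int \<times> int \<times> int) set" where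
  "Sset n m R1 R2 i = {((a + k) mod int n, (b + k) mod int n, (c + k) mod int n) | a b c k.
      (a, b, c) \<in> Kset n m R1 R2 i \<and> k \<in> {0..<int n}}"

definition triple :: "(int \<times> int \<Rightarrow> int) \<Rightarrow> int \<times> int \<Rightarrow> int \<Rightarrow> int \<times> int \<times> int" where
  "triple T s i = (T s, T (addv s (u i)), T (addv s (u (i + 1))))"

definition cyclic_triomino_solution :: "nat \<Rightarrow> nat \<Rightarrow> (nat \<times> nat) set \<Rightarrow> (nat \<times> nat) set \<Rightarrow> (int \<times> int \<Rightarrow> int) \<Rightarrow> bool" where
  "cyclic_triomino_solution n m R1 R2 T \<longleftrightarrow>
     (\<forall>s. \<forall>i \<in> {1..4}. triple T s i \<in> Sset n m R1 R2 i)"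

definition p_pred :: "nat \<Rightarrow> nat \<Rightarrow> (int \<times> int \<Rightarrow> int) \<Rightarrow> int \<times> int \<Rightarrow> int \<Rightarrow> bool" where
  "p_pred n m T s i \<longleftrightarrow> triple T s i \<in> Lset n m"

definition q_pred :: "nat \<Rightarrow> nat \<Rightarrow> (nat \<times> nat) set \<Rightarrow> (nat \<times> nat) set \<Rightarrow> (int \<times> int \<Rightarrow> int) \<Rightarrow> int \<times> int \<Rightarrow> int \<Rightarrow> bool" where
  "q_pred n m R1 R2 T s i \<longleftrightarrow> triple T s i \<in> Kset n m R1 R2 i - Lset n m"

end

theory Submission
  imports Defs
begin

text \<open>If q(s,j) holds, the triple at s in direction j is (0, x, y) with x, y \<in> W, so
  T(s) = 0 and T(s + u_{j+1}) = y. The triple in direction j+1 is some element of K_{j+1}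
  shifted by k. An element (w, 0, 0) of L would force k = y and first entry w + y \<in> [2, 2m],
  which is nonzero modulo n \<ge> 2m + 1. So the element lies in K_{j+1} \<setminus> L, its first
  entry 0 forces k = 0, and q(s, j+1) holds; going around the four directions gives the claim.\<close>

lemma int_periodic_induct:
  fixes P :: "int \<Rightarrow> bool" and c :: int
  assumes "c > 0"
    and periodic: "\<And>j k. j mod c = k mod c \<Longrightarrow> P j = P k"
    and succ: "\<And>j. P j \<Longrightarrow> P (j + 1)"
    and "P i"
  shows "P j"
proof -
  have ge: "P k" if "i \<le> k" for k
    using that by (induction k rule: int_ge_induct) (use \<open>P i\<close> succ in auto)
  have "P (i + (j - i) mod c)"
    by (rule ge) (simp add: \<open>c > 0\<close>)
  moreover have "(i + (j - i) mod c) mod c = j mod c"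
    by (simp add: mod_add_right_eq)
  ultimately show ?thesis
    using periodic by blast
qed

lemma Lset_eq:
  assumes "m < n"
  shows "Lset n m = {(int w, 0, 0) | w. w \<in> {1..m}}"
  using assms unfolding Lset_def by force

lemma Kset_subset:
  assumes "domino_set m R1 R2" and "m < n"
  shows "Kset n m R1 R2 j \<subseteq> Lset n m \<union> {(0, int x, int y) | x y. x \<in> {1..m} \<and> y \<in> {1..m}}"
  using assms unfolding Kset_def domino_set_def by (auto split: if_splits)

lemma u_mod_4_cong: "j mod 4 = k mod 4 \<Longrightarrow> u j = u k"
  unfolding u_def by (simp only:)

lemma Kset_mod_4_cong: "j mod 4 = k mod 4 \<Longrightarrow> Kset n m R1 R2 j = Kset n m R1 R2 k"
  unfolding Kset_def by (simp only:)

lemma Sset_mod_4_cong: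
  assumes "j mod 4 = k mod 4"
  shows "Sset n m R1 R2 j = Sset n m R1 R2 k"
  by (simp only: Sset_def Kset_mod_4_cong[OF assms])

lemma triple_mod_4_cong:
  assumes "j mod 4 = k mod 4"
  shows "triple T s j = triple T s k"
proof -
  have succ: "(j + 1) mod 4 = (k + 1) mod 4"
    using assms by (metis mod_add_left_eq)
  show ?thesis
    by (simp only: triple_def u_mod_4_cong[OF assms] u_mod_4_cong[OF succ])
qed

lemma q_pred_mod_4_cong:
  assumes "j mod 4 = k mod 4"
  shows "q_pred n m R1 R2 T s j = q_pred n m R1 R2 T s k"
  by (simp only: q_pred_def triple_mod_4_cong[OF assms] Kset_mod_4_cong[OF assms])

lemma cyclic_triomino_solution_triple:
  assumes "cyclic_triomino_solution n m R1 R2 T"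
  shows "triple T s j \<in> Sset n m R1 R2 j"
proof -
  define j' where "j' = (if j mod 4 = 0 then 4 else j mod 4)"
  have "j' \<in> {1..4}" and "j' mod 4 = j mod 4"
    unfolding j'_def by auto
  then show ?thesis
    using assms unfolding cyclic_triomino_solution_def
    by (metis triple_mod_4_cong Sset_mod_4_cong)
qed

lemma q_pred_succ:
  assumes dom: "domino_set m R1 R2" and n: "2 * m + 1 \<le> n"
    and sol: "cyclic_triomino_solution n m R1 R2 T"
    and q: "q_pred n m R1 R2 T s j"
  shows "q_pred n m R1 R2 T s (j + 1)"
proof -
  have "m < n" using n by simp
  obtain x y where "triple T s j = (0, int x, int y)" and y: "y \<in> {1..m}"
    using q Kset_subset[OF dom \<open>m < n\<close>] unfolding q_pred_def by blast
  then have Ts: "T s = 0" and Tnext: "T (addv s (u (j + 1))) = int y"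
    unfolding triple_def by auto
  obtain a b c k where t: "triple T s (j + 1) = ((a + k) mod int n, (b + k) mod int n, (c + k) mod int n)"
    and abc: "(a, b, c) \<in> Kset n m R1 R2 (j + 1)" and k: "0 \<le> k" "k < int n"
    using cyclic_triomino_solution_triple[OF sol] unfolding Sset_def by fastforce
  have a: "(a + k) mod int n = 0" and b: "(b + k) mod int n = int y"
    using t Ts Tnext unfolding triple_def by auto
  have "(a, b, c) \<notin> Lset n m"
  proof
    assume "(a, b, c) \<in> Lset n m"
    then obtain w where "a = int w" "b = 0" "w \<in> {1..m}"
      using Lset_eq[OF \<open>m < n\<close>] by auto
    moreover from this have "k = int y"
      using b k by simp
    ultimately show False
      using a y n by simp
  qed
  then obtain x' y' where abc': "(a, b, c) = (0, int x', int y')" "x' \<in> {1..m}" "y' \<in> {1..m}"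
    using abc Kset_subset[OF dom \<open>m < n\<close>] by blast
  then have "k = 0"
    using a k by simp
  then have "triple T s (j + 1) = (a, b, c)"
    using t abc' \<open>m < n\<close> by simp
  then show ?thesis
    using abc \<open>(a, b, c) \<notin> Lset n m\<close> unfolding q_pred_def by (metis DiffI)
qed

theorem lemma3p3:
  fixes n m :: nat and R1 R2 :: "(nat \<times> nat) set" and T :: "int \<times> int \<Rightarrow> int"
    and s :: "int \<times> int" and i :: int
  assumes "domino_set m R1 R2"
    and "n \<ge> 2 * m + 1"
    and "cyclic_triomino_solution n m R1 R2 T"
    and "i \<in> {1..4}"
    and "q_pred n m R1 R2 T s i"
  shows "\<forall>j \<in> {1..4}. q_pred n m R1 R2 T s j"
  using int_periodic_induct[where c = 4,
      OF _ q_pred_mod_4_cong q_pred_succ[OF assms(1-3)] assms(5)]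
  by simp

end
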